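(* Let $\gamma$ be a unit speed geodesic ($k_g\equiv 0$) on a smooth oriented surface $M\subset E^3$, with nowhere-vanishing normal curvature, whose position vector always lies in the plane spanned by $\{T,V\}$. Then $\gamma$ is an isophotic curve if and only if $\dfrac{\kappa^2}{(\kappa^2+\tau^2)^{3/2}}$ is a constant function of $s$, where $\kappa,\tau$ are the curvature and torsion of $\gamma$.
   Context: For a unit speed curve $\gamma$ on an oriented surface $M\subset E^3$, the Darboux frame is $T=\gamma'$, $U$ = unit normal of $M$ along $\gamma$, $V = U\times T$, satisfying $T' = k_g V + k_n U$, $V' = -k_g T + \tau_g U$, $U' = -k_n T - \tau_g V$; here $k_g$, $k_n$, $\tau_g$ are the geodesic curvature, normal curvature and geodesic torsion. The curve $\gamma$ is an isophotic curve if there is a fixed unit vector $d$ and a constant angle $\phi$ with $\langle U, d\rangle = \cos\phi$ along $\gamma$. "Position vector lies in the plane spanned by $\{T,V\}$" means $\gamma(s) = \mu_1(s)T(s) + \mu_2(s)V(s)$ for differentiable functions $\mu_1,\mu_2$. $\kappa,\tau$ denote the Frenet curvature and torsion of $\gamma$. *)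

theory Defs
  imports "HOL-Analysis.Analysis" "HOL-Analysis.Cross3"
begin

definition smooth_curve_on :: "(real \<Rightarrow> 'a::real_normed_vector) \<Rightarrow> real set \<Rightarrow> bool" where
  "smooth_curve_on f I \<longleftrightarrow>
     (\<exists>D. D 0 = f \<and> (\<forall>n. \<forall>s\<in>I. (D n has_vector_derivative D (Suc n) s) (at s)))"

definition d1 :: "(real \<Rightarrow> real^3) \<Rightarrow> real \<Rightarrow> real^3" where
  "d1 g s = vector_derivative g (at s)"
definition d2 :: "(real \<Rightarrow> real^3) \<Rightarrow> real \<Rightarrow> real^3" where
  "d2 g s = vector_derivative (d1 g) (at s)"
definition d3 :: "(real \<Rightarrow> real^3) \<Rightarrow> real \<Rightarrow> real^3" where
  "d3 g s = vector_derivative (d2 g) (at s)"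

text \<open>Frenet curvature and torsion of a space curve (general-parameter formulas;
  for a unit speed curve the curvature is |gamma''|).\<close>
definition frenet_curvature :: "(real \<Rightarrow> real^3) \<Rightarrow> real \<Rightarrow> real" where
  "frenet_curvature g s = norm (cross3 (d1 g s) (d2 g s)) / norm (d1 g s) ^ 3"
definition frenet_torsion :: "(real \<Rightarrow> real^3) \<Rightarrow> real \<Rightarrow> real" where
  "frenet_torsion g s = ((cross3 (d1 g s) (d2 g s)) \<bullet> d3 g s) / (norm (cross3 (d1 g s) (d2 g s)))\<^sup>2"

definition isophotic :: "(real \<Rightarrow> real^3) \<Rightarrow> real set \<Rightarrow> bool" where
  "isophotic U I \<longleftrightarrow> (\<exists>d \<phi>. norm d = 1 \<and> (\<forall>s\<in>I. U s \<bullet> d = cos \<phi>))"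

end

theory Submission
  imports Defs
begin

(*
  Along a geodesic the surface normal U is the principal normal, so the Frenet curvature and torsion
  are |kn| and tau_g. Differentiating gamma = mu1 T + mu2 V with the Darboux equations gives
  mu1' = 1, mu2 = q constant and mu1 kn + q tau_g = 0, hence
  kappa^2 / (kappa^2 + tau^2)^(3/2) = |q|^3 / (|kn| |gamma|^3).
  If U . d = e is constant, the Darboux equations force the V-component of d to be
  b = kn e |gamma|^2 / q and its T-component to be mu1 b / q, so |d| = 1 makes kn^2 |gamma|^6 constant.
  Conversely, if kn |gamma|^3 = C q^2 is constant (kn keeps its sign), then U + C gamma / |gamma| has
  zero derivative and makes a constant angle with U.
*)

lemma has_real_derivative_inner:
  assumes "(f has_vector_derivative f') (at x)" "(g has_vector_derivative g') (at x)"
  shows "((\<lambda>s. f s \<bullet> g s) has_real_derivative f' \<bullet> g x + f x \<bullet> g') (at x)"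
  unfolding has_field_derivative_def
  by (rule has_derivative_eq_rhs[OF has_derivative_inner[OF assms[unfolded has_vector_derivative_def]]])
    (auto simp: algebra_simps)

lemma inner_self_orthonormal_cross3:
  fixes u t d :: "real^3"
  assumes "u \<bullet> u = 1" "t \<bullet> t = 1" "u \<bullet> t = 0"
  shows "d \<bullet> d = (u \<bullet> d)\<^sup>2 + (t \<bullet> d)\<^sup>2 + (cross3 u t \<bullet> d)\<^sup>2"
proof -
  have "(cross3 u t \<bullet> d)\<^sup>2 = (u\<bullet>u)*(t\<bullet>t)*(d\<bullet>d) + 2*(u\<bullet>t)*(t\<bullet>d)*(u\<bullet>d)
      - (u\<bullet>u)*(t\<bullet>d)\<^sup>2 - (t\<bullet>t)*(u\<bullet>d)\<^sup>2 - (d\<bullet>d)*(u\<bullet>t)\<^sup>2"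
    unfolding cross3_def inner_vec_def sum_3 by (simp add: vector_def power2_eq_square algebra_simps)
  with assms show ?thesis by simp
qed

lemma continuous_nonvanishing_sgn_eq:
  fixes f :: "'a::topological_space \<Rightarrow> real"
  assumes "continuous_on S f" "connected S" "\<And>x. x \<in> S \<Longrightarrow> f x \<noteq> 0" "x \<in> S" "y \<in> S"
  shows "sgn (f x) = sgn (f y)"
proof (rule ccontr)
  assume "sgn (f x) \<noteq> sgn (f y)"
  then have "min (f x) (f y) \<le> 0" "0 \<le> max (f x) (f y)"
    using assms(3-5) by (auto simp: sgn_if split: if_splits)
  moreover have "min (f x) (f y) \<in> f ` S" "max (f x) (f y) \<in> f ` S"
    using assms(4,5) by (auto simp: min_def max_def)
  moreover have "connected (f ` S)"
    using connected_continuous_image assms(1,2) by blast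
  ultimately have "0 \<in> f ` S"
    unfolding connected_iff_interval by blast
  then show False
    using assms(3) by auto
qed

lemma divide_constant_iff:
  fixes a :: real and f :: "'a \<Rightarrow> real"
  assumes "a \<noteq> 0"
  shows "(\<exists>c. \<forall>s\<in>S. a / f s = c) \<longleftrightarrow> (\<exists>K. \<forall>s\<in>S. f s = K)"
proof
  assume "\<exists>c. \<forall>s\<in>S. a / f s = c"
  then obtain c where "\<forall>s\<in>S. a / f s = c" by blast
  \<comment> \<open>Also when \<open>c = 0\<close>, since then \<open>f s = 0 = a / 0\<close>.\<close>
  then have "\<forall>s\<in>S. f s = a / c"
    using assms by (auto simp: field_simps)
  then show "\<exists>K. \<forall>s\<in>S. f s = K" by blast
qed auto

lemma isophotic_iff_constant_inner:
  assumes "\<And>s. s \<in> I \<Longrightarrow> norm (U s) = 1"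
  shows "isophotic U I \<longleftrightarrow> (\<exists>d e. norm d = 1 \<and> (\<forall>s\<in>I. U s \<bullet> d = e))"
proof
  assume "\<exists>d e. norm d = 1 \<and> (\<forall>s\<in>I. U s \<bullet> d = e)"
  then obtain d e where d: "norm d = 1" and e: "\<forall>s\<in>I. U s \<bullet> d = e" by blast
  show "isophotic U I"
  proof (cases "I = {}")
    case False
    then obtain s0 where s0: "s0 \<in> I" by blast
    have "\<bar>e\<bar> \<le> 1"
      using Cauchy_Schwarz_ineq2[of "U s0" d] e s0 d assms[OF s0] by simp
    then have "\<forall>s\<in>I. U s \<bullet> d = cos (arccos e)"
      using e by (simp add: cos_arccos_abs)
    with d show ?thesis
      unfolding isophotic_def by blast
  qed (use d in \<open>auto simp: isophotic_def\<close>)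
qed (auto simp: isophotic_def)

lemma smooth_curve_on_has_vector_derivative:
  assumes "smooth_curve_on f I" "s \<in> I"
  shows "(f has_vector_derivative vector_derivative f (at s)) (at s)"
proof -
  obtain D where "D 0 = f" "\<forall>n. \<forall>s\<in>I. (D n has_vector_derivative D (Suc n) s) (at s)"
    using assms(1) unfolding smooth_curve_on_def by blast
  then have "(f has_vector_derivative D 1 s) (at s)"
    using assms(2) by auto
  then show ?thesis
    by (simp add: vector_derivative_at)
qed

lemma powr_three_halves_square:
  fixes y :: real
  assumes "y > 0"
  shows "(y\<^sup>2) powr (3/2) = y ^ 3"
proof -
  have "(y\<^sup>2) powr (3/2) = (y powr 2) powr (3/2)"
    using assms by (simp add: powr_realpow)
  also have "\<dots> = y powr 3"
    by (simp add: powr_powr)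
  finally show ?thesis
    using assms by (simp add: powr_realpow)
qed

lemma curvature_torsion_ratio_eq:
  fixes k p q :: real
  assumes "k \<noteq> 0" "q \<noteq> 0"
  shows "k\<^sup>2 / (k\<^sup>2 + (- k * p / q)\<^sup>2) powr (3/2) = \<bar>q\<bar> ^ 3 / (\<bar>k\<bar> * sqrt (p\<^sup>2 + q\<^sup>2) ^ 3)"
proof -
  define r where "r = sqrt (p\<^sup>2 + q\<^sup>2)"
  have r: "r > 0" "r\<^sup>2 = p\<^sup>2 + q\<^sup>2"
    using assms(2) by (simp_all add: r_def add_nonneg_pos)
  have "k\<^sup>2 + (- k * p / q)\<^sup>2 = (\<bar>k\<bar> * r / \<bar>q\<bar>)\<^sup>2"
    using assms r(2) by (simp add: field_simps power2_eq_square)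
  then have "(k\<^sup>2 + (- k * p / q)\<^sup>2) powr (3/2) = (\<bar>k\<bar> * r / \<bar>q\<bar>) ^ 3"
    using assms r(1) by (simp add: powr_three_halves_square)
  then have "k\<^sup>2 / (k\<^sup>2 + (- k * p / q)\<^sup>2) powr (3/2) = \<bar>k\<bar>\<^sup>2 / (\<bar>k\<bar> * r / \<bar>q\<bar>) ^ 3"
    by simp
  also have "\<dots> = \<bar>q\<bar> ^ 3 / (\<bar>k\<bar> * r ^ 3)"
    using assms r(1) by (simp add: field_simps power2_eq_square power3_eq_cube)
  finally show ?thesis
    unfolding r_def .
qed

locale geodesic_darboux_frame =
  fixes \<gamma> T U V :: "real \<Rightarrow> real^3" and kn \<tau>g :: "real \<Rightarrow> real" and I :: "real set"
  assumes open_I: "open I" and interval_I: "is_interval I"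
    and gamma_deriv: "\<And>s. s \<in> I \<Longrightarrow> (\<gamma> has_vector_derivative T s) (at s)"
    and T_deriv: "\<And>s. s \<in> I \<Longrightarrow> (T has_vector_derivative kn s *\<^sub>R U s) (at s)"
    and V_deriv: "\<And>s. s \<in> I \<Longrightarrow> (V has_vector_derivative \<tau>g s *\<^sub>R U s) (at s)"
    and U_deriv: "\<And>s. s \<in> I \<Longrightarrow> (U has_vector_derivative - kn s *\<^sub>R T s - \<tau>g s *\<^sub>R V s) (at s)"
    and T_unit: "\<And>s. s \<in> I \<Longrightarrow> norm (T s) = 1"
    and U_unit: "\<And>s. s \<in> I \<Longrightarrow> norm (U s) = 1"
    and U_T_orthogonal: "\<And>s. s \<in> I \<Longrightarrow> U s \<bullet> T s = 0"
    and V_eq: "\<And>s. s \<in> I \<Longrightarrow> V s = cross3 (U s) (T s)"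
begin

lemma frame_inner [simp]:
  assumes "s \<in> I"
  shows "T s \<bullet> T s = 1" "U s \<bullet> U s = 1" "V s \<bullet> V s = 1"
    "U s \<bullet> T s = 0" "T s \<bullet> U s = 0" "V s \<bullet> T s = 0" "T s \<bullet> V s = 0" "V s \<bullet> U s = 0" "U s \<bullet> V s = 0"
proof -
  show "T s \<bullet> T s = 1" "U s \<bullet> U s = 1"
    using T_unit U_unit assms by (simp_all add: dot_square_norm)
  show UT: "U s \<bullet> T s = 0" "T s \<bullet> U s = 0"
    using U_T_orthogonal assms by (simp_all add: inner_commute)
  have "(norm (V s))\<^sup>2 = 1"
    using norm_cross_dot[of "U s" "T s"] V_eq U_unit T_unit UT assms by simp
  then show "V s \<bullet> V s = 1"
    by (simp add: power2_norm_eq_inner)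
  show "V s \<bullet> T s = 0" "T s \<bullet> V s = 0" "V s \<bullet> U s = 0" "U s \<bullet> V s = 0"
    using V_eq assms dot_cross_self[of "U s" "T s"] by (auto simp: inner_commute)
qed

lemma inner_self_frame:
  assumes "s \<in> I"
  shows "d \<bullet> d = (U s \<bullet> d)\<^sup>2 + (T s \<bullet> d)\<^sup>2 + (V s \<bullet> d)\<^sup>2"
  using inner_self_orthonormal_cross3[of "U s" "T s" d] V_eq assms by simp

lemma d1_eq: "s \<in> I \<Longrightarrow> d1 \<gamma> s = T s"
  using gamma_deriv by (simp add: d1_def vector_derivative_at)

lemma d2_eq: "s \<in> I \<Longrightarrow> d2 \<gamma> s = kn s *\<^sub>R U s"
  using has_vector_derivative_transform_within_open[OF T_deriv open_I, of s "d1 \<gamma>"] d1_eq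
  by (simp add: d2_def vector_derivative_at)

lemma cross3_d1_d2: "s \<in> I \<Longrightarrow> cross3 (d1 \<gamma> s) (d2 \<gamma> s) = - kn s *\<^sub>R V s"
  using d1_eq d2_eq V_eq cross_mult_right[of "T s" "kn s" "U s"] cross_skew[of "T s" "U s"] by simp

lemma frenet_curvature_eq: "s \<in> I \<Longrightarrow> frenet_curvature \<gamma> s = \<bar>kn s\<bar>"
  using cross3_d1_d2 d1_eq T_unit frame_inner(3) by (simp add: frenet_curvature_def norm_eq_sqrt_inner)

lemma frenet_torsion_eq:
  assumes "s \<in> I" "kn differentiable (at s)" "kn s \<noteq> 0"
  shows "frenet_torsion \<gamma> s = \<tau>g s"
proof -
  obtain kn' where kn': "(kn has_real_derivative kn') (at s)"
    using assms(2) real_differentiable_def by blast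
  have "((\<lambda>s. kn s *\<^sub>R U s) has_vector_derivative
      kn s *\<^sub>R (- kn s *\<^sub>R T s - \<tau>g s *\<^sub>R V s) + kn' *\<^sub>R U s) (at s)"
    by (intro has_vector_derivative_scaleR U_deriv assms(1) kn')
  then have "d3 \<gamma> s = kn s *\<^sub>R (- kn s *\<^sub>R T s - \<tau>g s *\<^sub>R V s) + kn' *\<^sub>R U s"
    using has_vector_derivative_transform_within_open[OF _ open_I assms(1), of _ _ "d2 \<gamma>"] d2_eq
    by (simp add: d3_def vector_derivative_at)
  then show ?thesis
    using assms(1,3) cross3_d1_d2[OF assms(1)]
    by (simp add: frenet_torsion_def norm_eq_sqrt_inner inner_add_right inner_diff_right power2_eq_square)
qed

lemma kn_differentiable:
  assumes "smooth_curve_on \<gamma> I" "s \<in> I"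
  shows "kn differentiable (at s)"
proof -
  obtain D where D0: "D 0 = \<gamma>" and D: "\<And>n s. s \<in> I \<Longrightarrow> (D n has_vector_derivative D (Suc n) s) (at s)"
    using assms(1) unfolding smooth_curve_on_def by blast
  have D1: "D 1 s = T s" if "s \<in> I" for s
    using vector_derivative_unique_at[OF D[OF that, of 0, unfolded D0] gamma_deriv[OF that]] by simp
  have D2: "D 2 s = kn s *\<^sub>R U s" if "s \<in> I" for s
    using has_vector_derivative_transform_within_open[OF D[OF that, of 1] open_I that, of T] D1
    by (intro vector_derivative_unique_at[OF _ T_deriv[OF that]]) (simp add: numeral_2_eq_2)
  have "((\<lambda>s. D 2 s \<bullet> U s) has_real_derivative D 3 s \<bullet> U s + D 2 s \<bullet> (- kn s *\<^sub>R T s - \<tau>g s *\<^sub>R V s)) (at s)"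
    using has_real_derivative_inner[OF D[OF assms(2), of 2] U_deriv[OF assms(2)]] by (simp add: numeral_3_eq_3)
  then have "(kn has_real_derivative D 3 s \<bullet> U s + D 2 s \<bullet> (- kn s *\<^sub>R T s - \<tau>g s *\<^sub>R V s)) (at s)"
    by (rule has_field_derivative_transform_within_open[OF _ open_I assms(2)]) (simp add: D2)
  then show ?thesis
    using real_differentiable_def by blast
qed

lemma constant_angle_derivatives:
  assumes "\<And>s. s \<in> I \<Longrightarrow> U s \<bullet> d = e" "s \<in> I"
  shows "((\<lambda>s. T s \<bullet> d) has_real_derivative kn s * e) (at s)"
    and "((\<lambda>s. V s \<bullet> d) has_real_derivative \<tau>g s * e) (at s)"
    and "kn s * (T s \<bullet> d) + \<tau>g s * (V s \<bullet> d) = 0"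
proof -
  show "((\<lambda>s. T s \<bullet> d) has_real_derivative kn s * e) (at s)"
    using has_real_derivative_inner[OF T_deriv[OF assms(2)] has_vector_derivative_const[of d]] assms by simp
  show "((\<lambda>s. V s \<bullet> d) has_real_derivative \<tau>g s * e) (at s)"
    using has_real_derivative_inner[OF V_deriv[OF assms(2)] has_vector_derivative_const[of d]] assms by simp
  have "((\<lambda>s. U s \<bullet> d) has_real_derivative - kn s * (T s \<bullet> d) - \<tau>g s * (V s \<bullet> d)) (at s)"
    using has_real_derivative_inner[OF U_deriv[OF assms(2)] has_vector_derivative_const[of d]]
    by (simp add: inner_diff_left)
  moreover have "((\<lambda>s. U s \<bullet> d) has_real_derivative 0) (at s)"
    using has_field_derivative_transform_within_open[OF DERIV_const open_I assms(2), of e] assms(1) by simp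
  ultimately show "kn s * (T s \<bullet> d) + \<tau>g s * (V s \<bullet> d) = 0"
    using DERIV_unique by fastforce
qed

end

locale rectifying_geodesic = geodesic_darboux_frame +
  fixes \<mu>1 \<mu>2 :: "real \<Rightarrow> real"
  assumes nonempty: "I \<noteq> {}"
    and kn_nonzero: "\<And>s. s \<in> I \<Longrightarrow> kn s \<noteq> 0"
    and mu_differentiable: "\<mu>1 differentiable_on I" "\<mu>2 differentiable_on I"
    and position: "\<And>s. s \<in> I \<Longrightarrow> \<gamma> s = \<mu>1 s *\<^sub>R T s + \<mu>2 s *\<^sub>R V s"
begin

lemma position_coefficients:
  assumes "s \<in> I"
  shows "(\<mu>1 has_real_derivative 1) (at s)" "(\<mu>2 has_real_derivative 0) (at s)"
    and "\<mu>1 s * kn s + \<mu>2 s * \<tau>g s = 0"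
proof -
  have "\<mu>1 differentiable (at s)" "\<mu>2 differentiable (at s)"
    using mu_differentiable assms at_within_open[OF assms open_I] by (auto simp: differentiable_on_def)
  then obtain m1 m2 where m1: "(\<mu>1 has_real_derivative m1) (at s)" and m2: "(\<mu>2 has_real_derivative m2) (at s)"
    using real_differentiable_def by blast
  have "((\<lambda>s. \<mu>1 s *\<^sub>R T s + \<mu>2 s *\<^sub>R V s) has_vector_derivative
      (\<mu>1 s *\<^sub>R (kn s *\<^sub>R U s) + m1 *\<^sub>R T s) + (\<mu>2 s *\<^sub>R (\<tau>g s *\<^sub>R U s) + m2 *\<^sub>R V s)) (at s)"
    by (intro has_vector_derivative_add has_vector_derivative_scaleR m1 m2 T_deriv V_deriv assms)
  then have "(\<gamma> has_vector_derivative
      (\<mu>1 s *\<^sub>R (kn s *\<^sub>R U s) + m1 *\<^sub>R T s) + (\<mu>2 s *\<^sub>R (\<tau>g s *\<^sub>R U s) + m2 *\<^sub>R V s)) (at s)"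
    by (rule has_vector_derivative_transform_within_open[OF _ open_I assms]) (simp add: position)
  then have "T s = (\<mu>1 s *\<^sub>R (kn s *\<^sub>R U s) + m1 *\<^sub>R T s) + (\<mu>2 s *\<^sub>R (\<tau>g s *\<^sub>R U s) + m2 *\<^sub>R V s)"
    by (rule vector_derivative_unique_at[OF gamma_deriv[OF assms]])
  also have "\<dots> = m1 *\<^sub>R T s + m2 *\<^sub>R V s + (\<mu>1 s * kn s + \<mu>2 s * \<tau>g s) *\<^sub>R U s"
    by (simp add: algebra_simps)
  finally have T_eq: "T s = m1 *\<^sub>R T s + m2 *\<^sub>R V s + (\<mu>1 s * kn s + \<mu>2 s * \<tau>g s) *\<^sub>R U s" .
  have "m1 = 1" "m2 = 0" "\<mu>1 s * kn s + \<mu>2 s * \<tau>g s = 0"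
    using arg_cong[OF T_eq, of "\<lambda>x. x \<bullet> T s"] arg_cong[OF T_eq, of "\<lambda>x. x \<bullet> V s"]
      arg_cong[OF T_eq, of "\<lambda>x. x \<bullet> U s"] assms
    by (simp_all add: inner_add_left)
  with m1 m2 show "(\<mu>1 has_real_derivative 1) (at s)" "(\<mu>2 has_real_derivative 0) (at s)"
    and "\<mu>1 s * kn s + \<mu>2 s * \<tau>g s = 0" by simp_all
qed

lemma mu2_constant_nonzero:
  obtains q where "q \<noteq> 0" "\<And>s. s \<in> I \<Longrightarrow> \<mu>2 s = q"
proof -
  obtain q where q: "\<forall>s\<in>I. \<mu>2 s = q"
    using has_field_derivative_zero_constant[OF is_interval_convex[OF interval_I]]
      position_coefficients(2) has_field_derivative_at_within by blast
  have "q \<noteq> 0"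
  proof
    assume "q = 0"
    then have "\<forall>s\<in>I. \<mu>1 s = 0"
      using position_coefficients(3) q kn_nonzero by auto
    moreover obtain s0 where "s0 \<in> I"
      using nonempty by blast
    ultimately have "(\<mu>1 has_real_derivative 0) (at s0)"
      using has_field_derivative_transform_within_open[OF DERIV_const open_I, of s0 0 \<mu>1] by simp
    then show False
      using DERIV_unique position_coefficients(1)[OF \<open>s0 \<in> I\<close>] by fastforce
  qed
  with q that show thesis by blast
qed

lemma geodesic_torsion_eq:
  assumes "s \<in> I" "\<mu>2 s = q" "q \<noteq> 0"
  shows "\<tau>g s = - kn s * \<mu>1 s / q"
  using position_coefficients(3)[OF assms(1)] assms(2,3) by (simp add: field_simps)

lemma norm_position_eq:
  assumes "s \<in> I"
  shows "norm (\<gamma> s) = sqrt ((\<mu>1 s)\<^sup>2 + (\<mu>2 s)\<^sup>2)"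
  using position[OF assms] assms
  by (simp add: norm_eq_sqrt_inner inner_add_left inner_add_right power2_eq_square)

lemma norm_position_pos:
  assumes "s \<in> I"
  shows "norm (\<gamma> s) > 0"
proof -
  obtain q where "q \<noteq> 0" "\<And>s. s \<in> I \<Longrightarrow> \<mu>2 s = q"
    using mu2_constant_nonzero by blast
  then have "(\<mu>1 s)\<^sup>2 + (\<mu>2 s)\<^sup>2 > 0"
    using assms by (simp add: add_nonneg_pos)
  then show ?thesis
    unfolding norm_position_eq[OF assms] by simp
qed

lemma norm_position_has_derivative:
  assumes "s \<in> I"
  shows "((\<lambda>s. norm (\<gamma> s)) has_real_derivative \<mu>1 s / norm (\<gamma> s)) (at s)"
proof -
  have "((\<lambda>s. \<gamma> s \<bullet> \<gamma> s) has_real_derivative 2 * \<mu>1 s) (at s)"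
    using has_real_derivative_inner[OF gamma_deriv[OF assms] gamma_deriv[OF assms]] position[OF assms] assms
    by (simp add: inner_add_right inner_commute)
  from DERIV_chain2[OF DERIV_real_sqrt this]
  have "((\<lambda>s. sqrt (\<gamma> s \<bullet> \<gamma> s)) has_real_derivative inverse (norm (\<gamma> s)) / 2 * (2 * \<mu>1 s)) (at s)"
    using norm_position_pos[OF assms] by (simp add: norm_eq_sqrt_inner)
  then show ?thesis
    by (simp add: norm_eq_sqrt_inner field_simps)
qed

lemma constant_angle_components:
  assumes e: "\<And>s. s \<in> I \<Longrightarrow> U s \<bullet> d = e" and q: "q \<noteq> 0" "\<And>s. s \<in> I \<Longrightarrow> \<mu>2 s = q"
    and s: "s \<in> I"
  shows "T s \<bullet> d = \<mu>1 s * (V s \<bullet> d) / q" and "V s \<bullet> d = kn s * e * ((\<mu>1 s)\<^sup>2 + q\<^sup>2) / q"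
proof -
  define a b where "a s = T s \<bullet> d" and "b s = V s \<bullet> d" for s
  have a_eq: "a s = \<mu>1 s * b s / q" if "s \<in> I" for s
    using constant_angle_derivatives(3)[OF e that] geodesic_torsion_eq[OF that q(2)[OF that] q(1)]
      kn_nonzero[OF that] q(1)
    unfolding a_def b_def by (simp add: field_simps)
  show "T s \<bullet> d = \<mu>1 s * (V s \<bullet> d) / q"
    using a_eq[OF s] unfolding a_def b_def .
  have "((\<lambda>s. \<mu>1 s * b s / q) has_real_derivative (1 * b s + \<tau>g s * e * \<mu>1 s) / q) (at s)"
    unfolding b_def
    by (rule DERIV_cdivide[OF DERIV_mult[OF position_coefficients(1)[OF s] constant_angle_derivatives(2)[OF e s]]])
  then have "(a has_real_derivative (1 * b s + \<tau>g s * e * \<mu>1 s) / q) (at s)"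
    by (rule has_field_derivative_transform_within_open[OF _ open_I s]) (simp add: a_eq)
  then have "kn s * e = (b s + \<tau>g s * e * \<mu>1 s) / q"
    using DERIV_unique constant_angle_derivatives(1)[OF e s] unfolding a_def by fastforce
  then show "V s \<bullet> d = kn s * e * ((\<mu>1 s)\<^sup>2 + q\<^sup>2) / q"
    using geodesic_torsion_eq[OF s q(2)[OF s] q(1)] q(1) unfolding b_def
    by (simp add: field_simps power2_eq_square)
qed

lemma kn_norm_cube_constant_if_isophotic:
  assumes "isophotic U I"
  shows "\<exists>K. \<forall>s\<in>I. \<bar>kn s\<bar> * norm (\<gamma> s) ^ 3 = K"
proof -
  obtain d e where d: "norm d = 1" and e: "\<And>s. s \<in> I \<Longrightarrow> U s \<bullet> d = e"
    using assms isophotic_iff_constant_inner U_unit by metis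
  obtain q where q: "q \<noteq> 0" "\<And>s. s \<in> I \<Longrightarrow> \<mu>2 s = q"
    using mu2_constant_nonzero by blast
  have unit: "(V s \<bullet> d)\<^sup>2 * ((\<mu>1 s)\<^sup>2 + q\<^sup>2) / q\<^sup>2 = 1 - e\<^sup>2" if "s \<in> I" for s
  proof -
    have "1 = e\<^sup>2 + (T s \<bullet> d)\<^sup>2 + (V s \<bullet> d)\<^sup>2"
      using inner_self_frame[OF that, of d] d e[OF that] by (simp add: dot_square_norm)
    then show ?thesis
      using constant_angle_components(1)[OF e q that] q(1) by (simp add: field_simps power2_eq_square)
  qed
  have "e \<noteq> 0"
  proof
    assume "e = 0"
    moreover obtain s0 where "s0 \<in> I"
      using nonempty by blast
    ultimately show False
      using unit constant_angle_components(2)[OF e q] by simp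
  qed
  have "\<bar>kn s\<bar> * norm (\<gamma> s) ^ 3 = sqrt (q ^ 4 * (1 - e\<^sup>2) / e\<^sup>2)" if "s \<in> I" for s
  proof -
    have "(kn s)\<^sup>2 * ((\<mu>1 s)\<^sup>2 + q\<^sup>2) ^ 3 = q ^ 4 * (1 - e\<^sup>2) / e\<^sup>2"
      using unit[OF that] constant_angle_components(2)[OF e q that] q(1) \<open>e \<noteq> 0\<close>
      by (simp add: field_simps power2_eq_square power3_eq_cube power4_eq_xxxx)
    moreover have "sqrt ((kn s)\<^sup>2 * ((\<mu>1 s)\<^sup>2 + q\<^sup>2) ^ 3) = \<bar>kn s\<bar> * norm (\<gamma> s) ^ 3"
      using norm_position_eq[OF that] q(2)[OF that] real_sqrt_power[of "(\<mu>1 s)\<^sup>2 + q\<^sup>2" 3]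
      by (simp add: real_sqrt_mult)
    ultimately show ?thesis
      by simp
  qed
  then show ?thesis by blast
qed

lemma normal_plus_position_has_derivative:
  assumes "s \<in> I"
  shows "((\<lambda>s. U s + (C / norm (\<gamma> s)) *\<^sub>R \<gamma> s) has_vector_derivative
      (C / norm (\<gamma> s) - C * (\<mu>1 s)\<^sup>2 / norm (\<gamma> s) ^ 3 - kn s) *\<^sub>R T s
      + (- C * \<mu>1 s * \<mu>2 s / norm (\<gamma> s) ^ 3 - \<tau>g s) *\<^sub>R V s) (at s)"
proof -
  define r where "r s = norm (\<gamma> s)" for s
  have r_pos: "r s > 0"
    using norm_position_pos[OF assms] by (simp add: r_def)
  have "((\<lambda>s. C / r s) has_real_derivative (0 * r s - C * (\<mu>1 s / r s)) / (r s * r s)) (at s)"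
    using DERIV_divide[OF DERIV_const norm_position_has_derivative[OF assms]] r_pos
    unfolding r_def by simp
  then have "((\<lambda>s. C / r s) has_real_derivative - C * \<mu>1 s / r s ^ 3) (at s)"
    using r_pos by (simp add: field_simps power3_eq_cube)
  then have "((\<lambda>s. U s + (C / r s) *\<^sub>R \<gamma> s) has_vector_derivative
      (- kn s *\<^sub>R T s - \<tau>g s *\<^sub>R V s) + ((C / r s) *\<^sub>R T s + (- C * \<mu>1 s / r s ^ 3) *\<^sub>R \<gamma> s)) (at s)"
    by (intro has_vector_derivative_add has_vector_derivative_scaleR U_deriv gamma_deriv assms)
  also have "(- kn s *\<^sub>R T s - \<tau>g s *\<^sub>R V s) + ((C / r s) *\<^sub>R T s + (- C * \<mu>1 s / r s ^ 3) *\<^sub>R \<gamma> s)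
      = (C / r s - C * (\<mu>1 s)\<^sup>2 / r s ^ 3 - kn s) *\<^sub>R T s + (- C * \<mu>1 s * \<mu>2 s / r s ^ 3 - \<tau>g s) *\<^sub>R V s"
    using position[OF assms] by (simp add: algebra_simps power2_eq_square)
  finally show ?thesis
    unfolding r_def .
qed

lemma signed_kn_norm_cube_constant:
  assumes kn_cont: "continuous_on I kn" and K: "\<And>s. s \<in> I \<Longrightarrow> \<bar>kn s\<bar> * norm (\<gamma> s) ^ 3 = K"
  shows "\<exists>C. \<forall>s\<in>I. kn s * norm (\<gamma> s) ^ 3 = C"
proof -
  obtain s0 where s0: "s0 \<in> I"
    using nonempty by blast
  have "kn s * norm (\<gamma> s) ^ 3 = sgn (kn s0) * K" if "s \<in> I" for s
  proof -
    have "sgn (kn s) = sgn (kn s0)"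
      using continuous_nonvanishing_sgn_eq[OF kn_cont is_interval_connected[OF interval_I] kn_nonzero that s0] .
    have "kn s * norm (\<gamma> s) ^ 3 = sgn (kn s) * (\<bar>kn s\<bar> * norm (\<gamma> s) ^ 3)"
      by (simp only: mult.assoc[symmetric] sgn_mult_abs)
    also have "\<dots> = sgn (kn s0) * K"
      by (simp only: \<open>sgn (kn s) = sgn (kn s0)\<close> K[OF that])
    finally show ?thesis .
  qed
  then show ?thesis by blast
qed

lemma isophotic_if_kn_norm_cube_constant:
  assumes K: "\<And>s. s \<in> I \<Longrightarrow> kn s * norm (\<gamma> s) ^ 3 = K"
  shows "isophotic U I"
proof -
  obtain q where q: "q \<noteq> 0" "\<And>s. s \<in> I \<Longrightarrow> \<mu>2 s = q"
    using mu2_constant_nonzero by blast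
  obtain s0 where s0: "s0 \<in> I"
    using nonempty by blast
  define C where "C = K / q\<^sup>2"
  have kn_eq: "kn s = C * q\<^sup>2 / norm (\<gamma> s) ^ 3" if "s \<in> I" for s
  proof -
    have "kn s = K / norm (\<gamma> s) ^ 3"
      using K[OF that] norm_position_pos[OF that] by (simp add: eq_divide_eq)
    then show ?thesis
      using q(1) unfolding C_def by simp
  qed
  define D where "D s = U s + (C / norm (\<gamma> s)) *\<^sub>R \<gamma> s" for s
  have "(D has_vector_derivative 0) (at s)" if "s \<in> I" for s
  proof -
    have "C / norm (\<gamma> s) - C * (\<mu>1 s)\<^sup>2 / norm (\<gamma> s) ^ 3 - kn s
        = C * ((norm (\<gamma> s))\<^sup>2 - (\<mu>1 s)\<^sup>2 - q\<^sup>2) / norm (\<gamma> s) ^ 3"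
      using kn_eq[OF that] norm_position_pos[OF that] by (simp add: field_simps power2_eq_square power3_eq_cube)
    also have "\<dots> = 0"
      using norm_position_eq[OF that] q(2)[OF that] by simp
    moreover have "- C * \<mu>1 s * q / norm (\<gamma> s) ^ 3 - \<tau>g s = 0"
      unfolding geodesic_torsion_eq[OF that q(2)[OF that] q(1)] kn_eq[OF that]
      using q(1) norm_position_pos[OF that] by (simp add: field_simps power2_eq_square)
    ultimately show ?thesis
      using normal_plus_position_has_derivative[OF that, of C] q(2)[OF that] unfolding D_def by simp
  qed
  then obtain d0 where d0: "\<And>s. s \<in> I \<Longrightarrow> D s = d0"
    using has_vector_derivative_zero_constant[OF is_interval_convex[OF interval_I]]
      has_vector_derivative_at_within by metis
  have U_gamma: "U s \<bullet> \<gamma> s = 0" if "s \<in> I" for s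
    using position[OF that] that by (simp add: inner_add_right)
  have U_d0: "U s \<bullet> d0 = 1" if "s \<in> I" for s
    unfolding d0[OF that, symmetric] D_def using U_gamma[OF that] that by (simp add: inner_add_right)
  have "d0 \<bullet> d0 = 1 + C\<^sup>2"
    unfolding d0[OF s0, symmetric] D_def using U_gamma[OF s0] norm_position_pos[OF s0] s0 dot_square_norm[of "\<gamma> s0"]
    by (simp add: inner_add_left inner_add_right inner_commute power2_eq_square)
  then have norm_d0: "norm d0 > 0"
    by (auto simp: norm_eq_sqrt_inner add_pos_nonneg)
  have "norm (d0 /\<^sub>R norm d0) = 1" "\<forall>s\<in>I. U s \<bullet> (d0 /\<^sub>R norm d0) = inverse (norm d0)"
    using norm_d0 U_d0 by simp_all
  then show ?thesis
    using isophotic_iff_constant_inner U_unit by blast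
qed

lemma isophotic_iff_kn_norm_cube_constant:
  assumes "continuous_on I kn"
  shows "isophotic U I \<longleftrightarrow> (\<exists>K. \<forall>s\<in>I. \<bar>kn s\<bar> * norm (\<gamma> s) ^ 3 = K)"
proof
  assume "\<exists>K. \<forall>s\<in>I. \<bar>kn s\<bar> * norm (\<gamma> s) ^ 3 = K"
  then obtain C where "\<forall>s\<in>I. kn s * norm (\<gamma> s) ^ 3 = C"
    using signed_kn_norm_cube_constant[OF assms] by blast
  then show "isophotic U I"
    using isophotic_if_kn_norm_cube_constant by blast
qed (rule kn_norm_cube_constant_if_isophotic)

end

theorem corollary4p1:
  fixes \<gamma> U T V :: "real \<Rightarrow> real^3" and kg kn \<tau>g :: "real \<Rightarrow> real" and I :: "real set"
  assumes I: "open I" "is_interval I" "I \<noteq> {}"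
    and smooth: "smooth_curve_on \<gamma> I" "smooth_curve_on U I"
    and T_def: "\<forall>s\<in>I. T s = vector_derivative \<gamma> (at s)"
    and unit_speed: "\<forall>s\<in>I. norm (T s) = 1"
    and U_unit: "\<forall>s\<in>I. norm (U s) = 1"
    and U_normal: "\<forall>s\<in>I. U s \<bullet> T s = 0"
    and V_def: "\<forall>s\<in>I. V s = cross3 (U s) (T s)"
    and darboux_T: "\<forall>s\<in>I. (T has_vector_derivative (kg s *\<^sub>R V s + kn s *\<^sub>R U s)) (at s)"
    and darboux_V: "\<forall>s\<in>I. (V has_vector_derivative (- kg s *\<^sub>R T s + \<tau>g s *\<^sub>R U s)) (at s)"
    and darboux_U: "\<forall>s\<in>I. (U has_vector_derivative (- kn s *\<^sub>R T s - \<tau>g s *\<^sub>R V s)) (at s)"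
    and geodesic: "\<forall>s\<in>I. kg s = 0"
    and kn_nonzero: "\<forall>s\<in>I. kn s \<noteq> 0"
    and position: "\<exists>\<mu>1 \<mu>2. \<mu>1 differentiable_on I \<and> \<mu>2 differentiable_on I \<and>
                     (\<forall>s\<in>I. \<gamma> s = \<mu>1 s *\<^sub>R T s + \<mu>2 s *\<^sub>R V s)"
  shows "isophotic U I \<longleftrightarrow>
           (\<exists>c. \<forall>s\<in>I. (frenet_curvature \<gamma> s)\<^sup>2 /
                  ((frenet_curvature \<gamma> s)\<^sup>2 + (frenet_torsion \<gamma> s)\<^sup>2) powr (3/2) = c)"
proof -
  obtain \<mu>1 \<mu>2 where \<mu>: "\<mu>1 differentiable_on I" "\<mu>2 differentiable_on I"
    "\<forall>s\<in>I. \<gamma> s = \<mu>1 s *\<^sub>R T s + \<mu>2 s *\<^sub>R V s"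
    using position by blast
  interpret rectifying_geodesic \<gamma> T U V kn \<tau>g I \<mu>1 \<mu>2
    using I T_def unit_speed U_unit U_normal V_def darboux_T darboux_V darboux_U geodesic kn_nonzero \<mu>
      smooth_curve_on_has_vector_derivative[OF smooth(1)]
    by unfold_locales auto
  obtain q where q: "q \<noteq> 0" "\<And>s. s \<in> I \<Longrightarrow> \<mu>2 s = q"
    using mu2_constant_nonzero by blast
  have kn_diff: "kn differentiable (at s)" if "s \<in> I" for s
    using kn_differentiable[OF smooth(1) that] .
  have ratio: "(frenet_curvature \<gamma> s)\<^sup>2 / ((frenet_curvature \<gamma> s)\<^sup>2 + (frenet_torsion \<gamma> s)\<^sup>2) powr (3/2)
      = \<bar>q\<bar> ^ 3 / (\<bar>kn s\<bar> * norm (\<gamma> s) ^ 3)" if "s \<in> I" for s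
    using curvature_torsion_ratio_eq[OF kn_nonzero[OF that] q(1), of "\<mu>1 s"]
      frenet_curvature_eq[OF that] frenet_torsion_eq[OF that kn_diff[OF that] kn_nonzero[OF that]]
      geodesic_torsion_eq[OF that q(2)[OF that] q(1)] norm_position_eq[OF that] q(2)[OF that]
    by simp
  have "continuous_on I kn"
    using kn_diff by (simp add: continuous_at_imp_continuous_on differentiable_imp_continuous_within)
  then have "isophotic U I \<longleftrightarrow> (\<exists>K. \<forall>s\<in>I. \<bar>kn s\<bar> * norm (\<gamma> s) ^ 3 = K)"
    by (rule isophotic_iff_kn_norm_cube_constant)
  also have "\<dots> \<longleftrightarrow> (\<exists>c. \<forall>s\<in>I. \<bar>q\<bar> ^ 3 / (\<bar>kn s\<bar> * norm (\<gamma> s) ^ 3) = c)"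
    using divide_constant_iff[of "\<bar>q\<bar> ^ 3" I] q(1) by simp
  finally show ?thesis
    using ratio by simp
qed

end
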